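(* Let $H_1,\dots,H_K$ be Hermitian operators and $V_1,\dots,V_K$ unitaries on a finite-dimensional Hilbert space, let $\mathcal S:\{1,\dots,K\}\to\{1,2\}$ assign to each generator one of two real parameters $\theta_1,\theta_2$, let $U(\theta_1,\theta_2)=\prod_{k=1}^KV_ke^{-i\theta_{\mathcal S(k)}H_k}$ (ordered product, $k=1$ leftmost), and $\mathcal{E}_{\theta_1,\theta_2}(A)=U(\theta_1,\theta_2)^\dagger AU(\theta_1,\theta_2)$ for an operator $A$. Then for all integers $p_1,p_2\ge0$ and all $\phi_1,\phi_2\in\mathbb{R}$, $$\left\|\frac{\partial^{p_1+p_2}}{\partial\theta_1^{p_1}\partial\theta_2^{p_2}}\mathcal{E}_{\theta_1,\theta_2}(A)\Big|_{\theta_1=\phi_1,\theta_2=\phi_2}\right\|_\infty\le\Big(\sum_{l\in\mathcal S^{-1}(1)}2\omega^{(\max)}(H_l)\Big)^{p_1}\Big(\sum_{l\in\mathcal S^{-1}(2)}2\omega^{(\max)}(H_l)\Big)^{p_2}\|A\|_\infty.$$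
   Context: $\omega^{(\max)}(H)=\lambda_{\max}(H)-\lambda_{\min}(H)$ (largest minus smallest eigenvalue); $\|\cdot\|_\infty$ is the operator norm; $\mathcal S^{-1}(j)=\{l:\mathcal S(l)=j\}$. *)

theory Defs
  imports "HOL-Analysis.Analysis"
begin

text \<open>Operators on a finite-dimensional complex Hilbert space C^n, with n encoded
  by a finite type 'n, represented as complex n x n matrices. The Hilbert norm on
  complex^'n is the Euclidean norm (sqrt of the sum of squared moduli).\<close>

definition mat_adj :: "complex^'n^'n \<Rightarrow> complex^'n^'n" where
  "mat_adj A = (\<chi> i j. cnj (A $ j $ i))"

definition hermitian_mat :: "complex^'n^'n \<Rightarrow> bool" where
  "hermitian_mat A \<longleftrightarrow> mat_adj A = A"

definition unitary_mat :: "complex^'n^'n \<Rightarrow> bool" where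
  "unitary_mat U \<longleftrightarrow> mat_adj U ** U = mat 1 \<and> U ** mat_adj U = mat 1"

fun mat_pow :: "complex^'n^'n \<Rightarrow> nat \<Rightarrow> complex^'n^'n" where
  "mat_pow A 0 = mat 1"
| "mat_pow A (Suc k) = A ** mat_pow A k"

definition mat_exp :: "complex^'n^'n \<Rightarrow> complex^'n^'n" where
  "mat_exp A = (\<Sum>k. (1 / fact k) *\<^sub>R mat_pow A k)"

definition cscale :: "complex \<Rightarrow> complex^'n^'n \<Rightarrow> complex^'n^'n" where
  "cscale c A = (\<chi> i j. c * A $ i $ j)"

text \<open>Real eigenvalues (all eigenvalues of a Hermitian matrix are real).\<close>
definition eigenvalues_real :: "complex^'n^'n \<Rightarrow> real set" where
  "eigenvalues_real H = {e. \<exists>v. v \<noteq> 0 \<and> H *v v = complex_of_real e *s v}"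

definition omega_max :: "complex^'n^'n \<Rightarrow> real" where
  "omega_max H = Max (eigenvalues_real H) - Min (eigenvalues_real H)"

definition op_norm :: "complex^'n^'n \<Rightarrow> real" where
  "op_norm M = onorm (\<lambda>x. M *v x)"

definition circuit_U ::
  "(nat \<Rightarrow> complex^'n^'n) \<Rightarrow> (nat \<Rightarrow> complex^'n^'n) \<Rightarrow> (nat \<Rightarrow> nat) \<Rightarrow> nat
    \<Rightarrow> real \<Rightarrow> real \<Rightarrow> complex^'n^'n" where
  "circuit_U H V S K t1 t2 =
     foldr (\<lambda>k acc. (V k ** mat_exp (cscale (- \<i> * complex_of_real (if S k = 1 then t1 else t2)) (H k))) ** acc)
       [1..<K+1] (mat 1)"

definition channel ::
  "(nat \<Rightarrow> complex^'n^'n) \<Rightarrow> (nat \<Rightarrow> complex^'n^'n) \<Rightarrow> (nat \<Rightarrow> nat) \<Rightarrow> nat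
    \<Rightarrow> real \<Rightarrow> real \<Rightarrow> complex^'n^'n \<Rightarrow> complex^'n^'n" where
  "channel H V S K t1 t2 A = mat_adj (circuit_U H V S K t1 t2) ** A ** circuit_U H V S K t1 t2"

definition nth_deriv :: "nat \<Rightarrow> (real \<Rightarrow> 'a::real_normed_vector) \<Rightarrow> real \<Rightarrow> 'a" where
  "nth_deriv p f = ((\<lambda>g t. vector_derivative g (at t)) ^^ p) f"

definition mixed_partial ::
  "nat \<Rightarrow> nat \<Rightarrow> (real \<Rightarrow> real \<Rightarrow> 'a::real_normed_vector) \<Rightarrow> real \<Rightarrow> real \<Rightarrow> 'a" where
  "mixed_partial p1 p2 F x1 x2 = nth_deriv p1 (\<lambda>t1. nth_deriv p2 (\<lambda>t2. F t1 t2) x2) x1"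

end

(*
  U = W_1 ... W_K with W_k = V_k exp (-i t H_k), so the channel conjugates A first by W_1,
  then by W_2, ..., finally by W_K.  The derivative of the k-th conjugation in its angle is
  the commutator X |-> i [H_k, X] applied after it.  By the product rule every mixed partial
  derivative is therefore a sum of terms in which layer k is followed by e_k such
  commutators, and one more derivative in parameter j replaces each term by the sum of the
  terms with one more commutator at some layer k with S k = j.  Conjugation by a unitary is
  an isometry, and a commutator with H_k is unchanged when H_k is shifted by a multiple of
  the identity, so its norm is at most 2 ||H_k - lambda_min|| = 2 omega(H_k).  A term is thus
  bounded by prod_k (2 omega(H_k))^e_k ||A||, and these weights add up to the product of
  powers in the claim.
*)
theory Submission
  imports Defs
begin

section \<open>Operator norm of complex matrices\<close>

type_synonym 'n cmat = "complex^'n^'n"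

lemma bounded_linear_matrix_vector_mult: "bounded_linear (\<lambda>x. (M::'n::finite cmat) *v x)"
  by (simp add: linear_conv_bounded_linear)

lemma matrix_vector_mult_scaleR: "(r *\<^sub>R (M::'n::finite cmat)) *v x = r *\<^sub>R (M *v x)"
  by (simp add: vec_eq_iff matrix_vector_mult_def scaleR_sum_right)

lemma matrix_vector_mult_scaleR_right: "(M::'n::finite cmat) *v (r *\<^sub>R x) = r *\<^sub>R (M *v x)"
  by (simp add: linear_scale bounded_linear.linear[OF bounded_linear_matrix_vector_mult])

lemma op_norm_nonneg: "0 \<le> op_norm (M::'n::finite cmat)"
  unfolding op_norm_def by (rule onorm_pos_le[OF bounded_linear_matrix_vector_mult])

lemma norm_matrix_vector_mult_le: "norm ((M::'n::finite cmat) *v x) \<le> op_norm M * norm x"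
  unfolding op_norm_def by (rule onorm[OF bounded_linear_matrix_vector_mult])

lemma op_norm_le: "(\<And>x. norm ((M::'n::finite cmat) *v x) \<le> b * norm x) \<Longrightarrow> op_norm M \<le> b"
  unfolding op_norm_def by (rule onorm_le)

lemma op_norm_triangle: "op_norm ((M::'n::finite cmat) + N) \<le> op_norm M + op_norm N"
  unfolding op_norm_def matrix_vector_mult_add_rdistrib
  by (rule onorm_triangle[OF bounded_linear_matrix_vector_mult bounded_linear_matrix_vector_mult])

lemma op_norm_scaleR: "op_norm (r *\<^sub>R (M::'n::finite cmat)) = \<bar>r\<bar> * op_norm M"
  unfolding op_norm_def matrix_vector_mult_scaleR
  by (rule onorm_scaleR[OF bounded_linear_matrix_vector_mult])

lemma op_norm_matrix_mult: "op_norm ((M::'n::finite cmat) ** N) \<le> op_norm M * op_norm N"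
proof -
  have "(\<lambda>x. (M ** N) *v x) = (\<lambda>x. M *v x) \<circ> (\<lambda>x. N *v x)"
    by (auto simp: matrix_vector_mul_assoc)
  then show ?thesis
    unfolding op_norm_def
    using onorm_compose[OF bounded_linear_matrix_vector_mult bounded_linear_matrix_vector_mult] by simp
qed

lemma op_norm_eq_0_iff: "op_norm (M::'n::finite cmat) = 0 \<longleftrightarrow> M = 0"
  unfolding op_norm_def onorm_eq_0[OF bounded_linear_matrix_vector_mult]
  by (auto simp: matrix_eq fun_eq_iff)

lemma op_norm_mat_1: "op_norm (mat 1 :: 'n::finite cmat) = 1"
  by (simp add: op_norm_def onorm_id[unfolded id_def])

lemma norm_matrix_entry_le_op_norm: "norm ((M::'n::finite cmat) $ i $ j) \<le> op_norm M"
proof -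
  have "M $ i $ j = (M *v axis j 1) $ i"
    by (simp add: matrix_vector_mult_def axis_def if_distrib[of "\<lambda>x. _ * x"] cong: if_cong)
  also have "norm \<dots> \<le> norm (M *v axis j 1)" by (rule Finite_Cartesian_Product.norm_nth_le)
  also have "\<dots> \<le> op_norm M" using norm_matrix_vector_mult_le[of M "axis j 1"] by simp
  finally show ?thesis .
qed

lemma norm_le_op_norm: "norm (M::'n::finite cmat) \<le> real CARD('n) * real CARD('n) * op_norm M"
proof -
  have "norm M \<le> (\<Sum>i\<in>UNIV. \<Sum>j\<in>UNIV. norm (M $ i $ j))"
    unfolding norm_vec_def
    by (rule order_trans[OF L2_set_le_sum sum_mono[OF L2_set_le_sum]]) simp_all
  also have "\<dots> \<le> (\<Sum>i\<in>(UNIV::'n set). \<Sum>j\<in>(UNIV::'n set). op_norm M)"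
    by (intro sum_mono norm_matrix_entry_le_op_norm)
  finally show ?thesis by simp
qed

lemma norm_vector_scalar_mult: "norm (c *s (v::complex^'n)) = cmod c * norm v"
  by (simp add: norm_vec_def norm_mult L2_set_right_distrib)

lemma op_norm_cscale_le: "op_norm (cscale c (M::'n::finite cmat)) \<le> cmod c * op_norm M"
proof (rule op_norm_le)
  fix x :: "complex^'n"
  have "cscale c M *v x = c *s (M *v x)"
    by (simp add: vec_eq_iff cscale_def matrix_vector_mult_def sum_distrib_left mult.assoc)
  then show "norm (cscale c M *v x) \<le> cmod c * op_norm M * norm x"
    using norm_matrix_vector_mult_le[of M x]
    by (simp add: norm_vector_scalar_mult mult.assoc mult_left_mono)
qed

lemma cscale_diff: "cscale c (M - N) = cscale c M - cscale c N"
  by (simp add: cscale_def vec_eq_iff right_diff_distrib)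

lemma mat_adj_cscale: "mat_adj (cscale c M) = cscale (cnj c) (mat_adj M)"
  by (simp add: mat_adj_def cscale_def vec_eq_iff)

lemma cscale_mult_of_real: "cscale (c * complex_of_real t) M = t *\<^sub>R cscale c M"
  by (simp add: cscale_def vec_eq_iff) (simp add: scaleR_conv_of_real)

lemma cscale_scalar_commute:
  "cscale c (r *\<^sub>R mat 1) ** (M::'n::finite cmat) = M ** cscale c (r *\<^sub>R mat 1)"
  by (simp add: vec_eq_iff matrix_matrix_mult_def cscale_def mat_def if_distrib if_distribR
      mult.commute cong: if_cong)

lemma inner_matrix_vector_mult_mat_adj:
  "inner ((M::'n::finite cmat) *v x) y = inner x (mat_adj M *v y)"
proof -
  have inner_complex: "inner a b = Re (a * cnj b)" for a b :: complex
    by (simp add: inner_complex_def)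
  have "inner (M *v x) y = Re (\<Sum>i\<in>UNIV. \<Sum>j\<in>UNIV. M $ i $ j * x $ j * cnj (y $ i))"
    by (simp add: inner_vec_def inner_complex matrix_vector_mult_def sum_distrib_right Re_sum)
  also have "\<dots> = Re (\<Sum>j\<in>UNIV. \<Sum>i\<in>UNIV. M $ i $ j * x $ j * cnj (y $ i))"
    by (subst sum.swap) simp
  also have "\<dots> = inner x (mat_adj M *v y)"
    by (simp add: inner_vec_def inner_complex matrix_vector_mult_def mat_adj_def
        sum_distrib_left Re_sum mult_ac)
  finally show ?thesis .
qed

lemma hermitian_inner_symmetric:
  "hermitian_mat H \<Longrightarrow> inner ((H::'n::finite cmat) *v x) y = inner x (H *v y)"
  using inner_matrix_vector_mult_mat_adj[of H x y] by (simp add: hermitian_mat_def)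

lemma op_norm_le_1_if_mat_adj_mult_self:
  assumes "mat_adj M ** M = (mat 1 :: 'n::finite cmat)"
  shows "op_norm M \<le> 1"
proof (rule op_norm_le)
  fix x :: "complex^'n"
  have "inner (M *v x) (M *v x) = inner x x"
    by (simp add: inner_matrix_vector_mult_mat_adj matrix_vector_mul_assoc assms)
  then show "norm (M *v x) \<le> 1 * norm x"
    by (simp add: norm_eq_sqrt_inner)
qed

section \<open>Spectral spread of Hermitian matrices\<close>

lemma self_adjoint_inner_expand:
  fixes T :: "'a::real_inner \<Rightarrow> 'a"
  assumes "linear T" and "\<And>x y. inner (T x) y = inner x (T y)"
  shows "inner (T (x + s *\<^sub>R z)) (x + s *\<^sub>R z)
    = inner (T x) x + 2 * s * inner (T x) z + s\<^sup>2 * inner (T z) z"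
proof -
  have "T (x + s *\<^sub>R z) = T x + s *\<^sub>R T z"
    using assms(1) by (simp add: linear_add linear_scale)
  moreover have "inner (T z) x = inner (T x) z"
    using assms(2)[of z x] by (simp add: inner_commute)
  ultimately show ?thesis
    by (simp add: inner_add_left inner_add_right power2_eq_square algebra_simps)
qed

lemma self_adjoint_nonpos_form_zero:
  fixes T :: "'a::real_inner \<Rightarrow> 'a"
  assumes lin: "linear T" and sym: "\<And>x y. inner (T x) y = inner x (T y)"
    and nonpos: "\<And>z. inner (T z) z \<le> 0" and zero: "inner (T x) x = 0"
  shows "T x = 0"
proof (rule ccontr)
  assume "T x \<noteq> 0"
  define a where "a = inner (T x) (T x)"
  define c where "c = - inner (T (T x)) (T x)"
  define s where "s = a / (c + 1)"
  have "a > 0" using \<open>T x \<noteq> 0\<close> by (simp add: a_def)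
  moreover have "c \<ge> 0" using nonpos[of "T x"] by (simp add: c_def)
  ultimately have "s > 0" and "s * c < a" by (simp_all add: s_def field_simps)
  \<comment> \<open>moving from the maximiser x in the direction T x raises the form to first order\<close>
  have "2 * s * a - s\<^sup>2 * c \<le> 0"
    using nonpos[of "x + s *\<^sub>R T x"] self_adjoint_inner_expand[OF lin sym, of x s "T x"] zero
    by (simp add: a_def c_def)
  then have "s * (2 * a) \<le> s * (s * c)" by (simp add: power2_eq_square algebra_simps)
  then have "2 * a \<le> s * c" using \<open>s > 0\<close> by simp
  with \<open>s * c < a\<close> \<open>a > 0\<close> show False by simp
qed

lemma self_adjoint_norm_le:
  fixes T :: "'a::real_inner \<Rightarrow> 'a"
  assumes lin: "linear T" and sym: "\<And>x y. inner (T x) y = inner x (T y)"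
    and form: "\<And>z. \<bar>inner (T z) z\<bar> \<le> w * (norm z)\<^sup>2"
  shows "norm (T x) \<le> w * norm x"
proof (cases "T x = 0")
  case True
  have "0 \<le> w * (norm x)\<^sup>2" using form[of x] by linarith
  then have "0 \<le> w * norm x" by (cases "x = 0") (auto simp: zero_le_mult_iff)
  with True show ?thesis by simp
next
  case False
  \<comment> \<open>polarisation with y = T x rescaled to the length of x\<close>
  define y where "y = (norm x / norm (T x)) *\<^sub>R T x"
  have "x \<noteq> 0" using False linear_0[OF lin] by auto
  have norm_y: "inner y y = inner x x"
    using False by (simp add: y_def power2_norm_eq_inner[symmetric])
  have inner_xy: "inner (T x) y = norm x * norm (T x)"
    using False by (simp add: y_def power2_norm_eq_inner[symmetric] power2_eq_square)
  have "4 * inner (T x) y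
      = inner (T (x + 1 *\<^sub>R y)) (x + 1 *\<^sub>R y) - inner (T (x + (-1) *\<^sub>R y)) (x + (-1) *\<^sub>R y)"
    using self_adjoint_inner_expand[OF lin sym, of x 1 y] self_adjoint_inner_expand[OF lin sym, of x "-1" y]
    by simp
  also have "\<dots> \<le> w * (norm (x + 1 *\<^sub>R y))\<^sup>2 + w * (norm (x + (-1) *\<^sub>R y))\<^sup>2"
    using form[of "x + 1 *\<^sub>R y"] form[of "x + (-1) *\<^sub>R y"] by linarith
  also have "\<dots> = 4 * w * (norm x)\<^sup>2"
    using norm_y by (simp add: power2_norm_eq_inner inner_add_left inner_add_right inner_diff_left
        inner_diff_right inner_commute algebra_simps)
  finally have "norm x * norm (T x) \<le> norm x * (w * norm x)"
    using inner_xy by (simp add: power2_eq_square algebra_simps)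
  with \<open>x \<noteq> 0\<close> show ?thesis by simp
qed

lemma of_real_vector_scalar_mult: "complex_of_real e *s (v::complex^'n) = e *\<^sub>R v"
  by (simp add: vec_eq_iff) (simp add: scaleR_conv_of_real)

lemma eigenvalues_real_iff: "e \<in> eigenvalues_real H \<longleftrightarrow> (\<exists>v. v \<noteq> 0 \<and> H *v v = e *\<^sub>R v)"
  by (simp add: eigenvalues_real_def of_real_vector_scalar_mult)

lemma hermitian_max_rayleigh_eigenvalue:
  fixes H :: "'n::finite cmat"
  assumes herm: "hermitian_mat H"
  obtains m where "m \<in> eigenvalues_real H" and "\<And>z. inner (H *v z) z \<le> m * (norm z)\<^sup>2"
proof -
  define q where "q z = inner (H *v z) z" for z
  have "continuous_on (sphere 0 1) q"
    unfolding q_def by (intro continuous_intros linear_continuous_on bounded_linear_matrix_vector_mult)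
  moreover have "sphere (0::complex^'n) 1 \<noteq> {}"
    using vector_choose_size[of 1] by auto
  ultimately obtain x where x: "x \<in> sphere 0 1" and max: "\<And>y. y \<in> sphere 0 1 \<Longrightarrow> q y \<le> q x"
    using continuous_attains_sup[of "sphere 0 1" q] by auto
  have bound: "q z \<le> q x * (norm z)\<^sup>2" for z
  proof (cases "z = 0")
    case False
    have "q z = (norm z)\<^sup>2 * q ((1 / norm z) *\<^sub>R z)"
      using False by (simp add: q_def matrix_vector_mult_scaleR_right power2_eq_square)
    also have "\<dots> \<le> (norm z)\<^sup>2 * q x"
      using False by (intro mult_left_mono max) auto
    finally show ?thesis by (simp add: mult.commute)
  qed (simp add: q_def)
  define T where "T z = (H - q x *\<^sub>R mat 1) *v z" for z
  have T_eq: "T z = H *v z - q x *\<^sub>R z" for z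
    by (simp add: T_def matrix_vector_mult_diff_rdistrib matrix_vector_mult_scaleR)
  have "linear T"
    unfolding T_def by (simp add: bounded_linear.linear[OF bounded_linear_matrix_vector_mult])
  moreover have "inner (T y) z = inner y (T z)" for y z
    by (simp add: T_eq inner_diff_left inner_diff_right hermitian_inner_symmetric[OF herm])
  moreover have "inner (T z) z \<le> 0" for z
    using bound[of z] by (simp add: T_eq inner_diff_left q_def power2_norm_eq_inner)
  moreover have "inner (T x) x = 0"
    using x by (simp add: T_eq inner_diff_left q_def power2_norm_eq_inner[symmetric])
  ultimately have "T x = 0" by (rule self_adjoint_nonpos_form_zero)
  then have "q x \<in> eigenvalues_real H"
    using x unfolding eigenvalues_real_iff T_eq by (intro exI[of _ x]) auto
  with bound show ?thesis by (intro that) (auto simp: q_def)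
qed

lemma hermitian_min_rayleigh_eigenvalue:
  fixes H :: "'n::finite cmat"
  assumes herm: "hermitian_mat H"
  obtains m where "m \<in> eigenvalues_real H" and "\<And>z. m * (norm z)\<^sup>2 \<le> inner (H *v z) z"
proof -
  have neg: "(- H) *v z = - (H *v z)" for z
    using matrix_vector_mult_diff_rdistrib[of 0 H z] by simp
  have "hermitian_mat (- H)"
    using herm by (simp add: hermitian_mat_def mat_adj_def vec_eq_iff)
  then obtain m where m: "m \<in> eigenvalues_real (- H)" "\<And>z. inner ((- H) *v z) z \<le> m * (norm z)\<^sup>2"
    using hermitian_max_rayleigh_eigenvalue by blast
  from m(1) obtain v where "v \<noteq> 0" "H *v v = (- m) *\<^sub>R v"
    by (auto simp: eigenvalues_real_iff neg minus_equation_iff[of "H *v _"])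
  then have "- m \<in> eigenvalues_real H" by (auto simp: eigenvalues_real_iff)
  moreover have "- m * (norm z)\<^sup>2 \<le> inner (H *v z) z" for z
    using m(2)[of z] by (simp add: neg)
  ultimately show ?thesis by (rule that)
qed

lemma finite_eigenvalues_real:
  fixes H :: "'n::finite cmat"
  assumes herm: "hermitian_mat H"
  shows "finite (eigenvalues_real H)"
proof -
  define E where "E = eigenvalues_real H"
  define f where "f e = (SOME v. v \<noteq> 0 \<and> H *v v = e *\<^sub>R v)" for e
  have f: "f e \<noteq> 0 \<and> H *v f e = e *\<^sub>R f e" if "e \<in> E" for e
    using that unfolding f_def E_def eigenvalues_real_iff by (rule someI_ex)
  have orth: "inner (f e) (f e') = 0" if "e \<in> E" "e' \<in> E" "e \<noteq> e'" for e e'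
  proof -
    have "e * inner (f e) (f e') = inner (H *v f e) (f e')" using f[OF that(1)] by simp
    also have "\<dots> = inner (f e) (H *v f e')" by (rule hermitian_inner_symmetric[OF herm])
    also have "\<dots> = e' * inner (f e) (f e')" using f[OF that(2)] by simp
    finally show ?thesis using that(3) by simp
  qed
  have "inj_on f E"
    using orth f by (metis inj_onI inner_eq_zero_iff)
  moreover have "independent (f ` E)"
    by (rule pairwise_orthogonal_independent) (use f orth in \<open>auto simp: pairwise_def orthogonal_def\<close>)
  then have "finite (f ` E)" using independent_bound by blast
  ultimately show ?thesis unfolding E_def using finite_imageD by blast
qed

lemma hermitian_op_norm_shift_le:
  fixes H :: "'n::finite cmat"
  assumes herm: "hermitian_mat H"
  obtains c where "op_norm (H - c *\<^sub>R mat 1) \<le> omega_max H"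
proof -
  obtain hi where hi: "hi \<in> eigenvalues_real H" "\<And>z. inner (H *v z) z \<le> hi * (norm z)\<^sup>2"
    using hermitian_max_rayleigh_eigenvalue[OF herm] by blast
  obtain lo where lo: "lo \<in> eigenvalues_real H" "\<And>z. lo * (norm z)\<^sup>2 \<le> inner (H *v z) z"
    using hermitian_min_rayleigh_eigenvalue[OF herm] by blast
  have between: "lo \<le> e \<and> e \<le> hi" if e: "e \<in> eigenvalues_real H" for e
  proof -
    obtain v where "v \<noteq> 0" "H *v v = e *\<^sub>R v"
      using e by (auto simp: eigenvalues_real_iff)
    then have "inner (H *v v) v = e * (norm v)\<^sup>2" and "(norm v)\<^sup>2 > 0"
      by (simp_all add: power2_norm_eq_inner)
    then show ?thesis using lo(2)[of v] hi(2)[of v] by simp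
  qed
  have "Max (eigenvalues_real H) = hi" "Min (eigenvalues_real H) = lo"
    using finite_eigenvalues_real[OF herm] hi(1) lo(1) between by (auto intro: Max_eqI Min_eqI)
  then have "omega_max H = hi - lo" by (simp add: omega_max_def)
  define T where "T z = (H - lo *\<^sub>R mat 1) *v z" for z
  have T_eq: "T z = H *v z - lo *\<^sub>R z" for z
    by (simp add: T_def matrix_vector_mult_diff_rdistrib matrix_vector_mult_scaleR)
  have "norm (T z) \<le> omega_max H * norm z" for z
  proof (rule self_adjoint_norm_le)
    show "linear T"
      unfolding T_def by (simp add: bounded_linear.linear[OF bounded_linear_matrix_vector_mult])
    show "inner (T x) y = inner x (T y)" for x y
      by (simp add: T_eq inner_diff_left inner_diff_right hermitian_inner_symmetric[OF herm])
    show "\<bar>inner (T x) x\<bar> \<le> omega_max H * (norm x)\<^sup>2" for x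
      using lo(2)[of x] hi(2)[of x] unfolding \<open>omega_max H = hi - lo\<close>
      by (simp add: T_eq inner_diff_left power2_norm_eq_inner algebra_simps)
  qed
  then show ?thesis by (intro that[of lo] op_norm_le) (simp add: T_def)
qed

lemma omega_max_nonneg: "hermitian_mat (H::'n::finite cmat) \<Longrightarrow> 0 \<le> omega_max H"
  by (metis hermitian_op_norm_shift_le op_norm_nonneg order_trans)

section \<open>Complex matrices as a Banach algebra\<close>

(* With the operator norm, complex matrices form a Banach algebra; there the exponential
   series and the product rule for derivatives come with the library. *)
typedef (overloaded) ('n::finite) opmat = "UNIV :: 'n cmat set"
  morphisms Rep_opmat Abs_opmat by auto

setup_lifting type_definition_opmat

instantiation opmat :: (finite) real_normed_algebra_1
begin

lift_definition zero_opmat :: "'a opmat" is 0 .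
lift_definition one_opmat :: "'a opmat" is "mat 1" .
lift_definition plus_opmat :: "'a opmat \<Rightarrow> 'a opmat \<Rightarrow> 'a opmat" is "(+)" .
lift_definition minus_opmat :: "'a opmat \<Rightarrow> 'a opmat \<Rightarrow> 'a opmat" is "(-)" .
lift_definition uminus_opmat :: "'a opmat \<Rightarrow> 'a opmat" is uminus .
lift_definition times_opmat :: "'a opmat \<Rightarrow> 'a opmat \<Rightarrow> 'a opmat" is "(**)" .
lift_definition scaleR_opmat :: "real \<Rightarrow> 'a opmat \<Rightarrow> 'a opmat" is scaleR .
lift_definition norm_opmat :: "'a opmat \<Rightarrow> real" is op_norm .
definition dist_opmat :: "'a opmat \<Rightarrow> 'a opmat \<Rightarrow> real" where "dist_opmat x y = norm (x - y)"
definition sgn_opmat :: "'a opmat \<Rightarrow> 'a opmat" where "sgn_opmat x = inverse (norm x) *\<^sub>R x"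
definition uniformity_opmat :: "('a opmat \<times> 'a opmat) filter" where
  "uniformity_opmat = (INF e\<in>{0<..}. principal {(x, y). dist x y < e})"
definition open_opmat :: "'a opmat set \<Rightarrow> bool" where
  "open_opmat U = (\<forall>x\<in>U. \<forall>\<^sub>F (x', y) in uniformity. x' = x \<longrightarrow> y \<in> U)"

instance
proof
  fix x y z :: "'a opmat" and r s :: real and U :: "'a opmat set"
  show "x + y + z = x + (y + z)" by transfer (rule add.assoc)
  show "x + y = y + x" by transfer (rule add.commute)
  show "0 + x = x" by transfer simp
  show "- x + x = 0" by transfer simp
  show "x - y = x + - y" by transfer simp
  show "r *\<^sub>R (x + y) = r *\<^sub>R x + r *\<^sub>R y" by transfer (rule scaleR_add_right)
  show "(r + s) *\<^sub>R x = r *\<^sub>R x + s *\<^sub>R x" by transfer (rule scaleR_add_left)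
  show "r *\<^sub>R s *\<^sub>R x = (r * s) *\<^sub>R x" by transfer simp
  show "1 *\<^sub>R x = x" by transfer simp
  show "x * y * z = x * (y * z)" by transfer (simp add: matrix_mul_assoc)
  show "1 * x = x" by transfer simp
  show "x * 1 = x" by transfer simp
  show "(x + y) * z = x * z + y * z"
    by transfer (simp add: vec_eq_iff matrix_matrix_mult_def distrib_right sum.distrib)
  show "x * (y + z) = x * y + x * z" by transfer (rule matrix_add_ldistrib)
  show "(0::'a opmat) \<noteq> 1" by transfer (metis op_norm_mat_1 op_norm_eq_0_iff zero_neq_one)
  show "r *\<^sub>R x * y = r *\<^sub>R (x * y)"
    by transfer (simp add: vec_eq_iff matrix_matrix_mult_def scaleR_sum_right)
  show "x * r *\<^sub>R y = r *\<^sub>R (x * y)"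
    by transfer (simp add: vec_eq_iff matrix_matrix_mult_def scaleR_sum_right)
  show "norm (1::'a opmat) = 1" by transfer (rule op_norm_mat_1)
  show "norm (x * y) \<le> norm x * norm y" by transfer (rule op_norm_matrix_mult)
  show "norm x = 0 \<longleftrightarrow> x = 0" by transfer (rule op_norm_eq_0_iff)
  show "norm (x + y) \<le> norm x + norm y" by transfer (rule op_norm_triangle)
  show "norm (r *\<^sub>R x) = \<bar>r\<bar> * norm x" by transfer (rule op_norm_scaleR)
  show "dist x y = norm (x - y)" by (simp add: dist_opmat_def)
  show "sgn x = inverse (norm x) *\<^sub>R x" by (simp add: sgn_opmat_def)
  show "uniformity = (INF e\<in>{0<..}. principal {(x, y :: 'a opmat). dist x y < e})"
    by (simp add: uniformity_opmat_def)
  show "open U = (\<forall>x\<in>U. \<forall>\<^sub>F (x', y) in uniformity. x' = x \<longrightarrow> y \<in> U)"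
    by (simp add: open_opmat_def)
qed

end

lemmas Rep_opmat_simps [simp] = zero_opmat.rep_eq one_opmat.rep_eq plus_opmat.rep_eq
  minus_opmat.rep_eq uminus_opmat.rep_eq times_opmat.rep_eq scaleR_opmat.rep_eq

lemma bounded_linear_Rep_opmat: "bounded_linear (Rep_opmat :: 'n::finite opmat \<Rightarrow> 'n cmat)"
proof
  show "\<exists>K. \<forall>x::'n opmat. norm (Rep_opmat x) \<le> norm x * K"
    by (rule exI[of _ "real CARD('n) * real CARD('n)"], transfer) (metis norm_le_op_norm mult.commute)
qed simp_all

lemma bounded_linear_Abs_opmat: "bounded_linear (Abs_opmat :: 'n cmat \<Rightarrow> 'n::finite opmat)"
  unfolding linear_conv_bounded_linear[symmetric]
  by (rule linearI) (simp_all add: plus_opmat.abs_eq scaleR_opmat.abs_eq)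

instance opmat :: (finite) banach
proof
  fix X :: "nat \<Rightarrow> 'a opmat"
  assume "Cauchy X"
  then have "Cauchy (\<lambda>n. Rep_opmat (X n))"
    by (rule bounded_linear.Cauchy[OF bounded_linear_Rep_opmat])
  then obtain L where "(\<lambda>n. Rep_opmat (X n)) \<longlonglongrightarrow> L"
    using Cauchy_convergent_iff convergent_def by blast
  then have "(\<lambda>n. Abs_opmat (Rep_opmat (X n))) \<longlonglongrightarrow> Abs_opmat L"
    by (rule bounded_linear.tendsto[OF bounded_linear_Abs_opmat])
  then show "convergent X" by (auto simp: Rep_opmat_inverse convergent_def)
qed

lemma Rep_opmat_power: "Rep_opmat (x ^ k) = mat_pow (Rep_opmat x) k"
  by (induction k) simp_all

lemma mat_exp_eq_Rep_opmat_exp: "mat_exp (M::'n::finite cmat) = Rep_opmat (exp (Abs_opmat M))"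
proof -
  have "(\<lambda>k. Rep_opmat (Abs_opmat M ^ k /\<^sub>R fact k)) sums Rep_opmat (exp (Abs_opmat M :: 'n opmat))"
    by (rule bounded_linear.sums[OF bounded_linear_Rep_opmat exp_converges])
  then have "(\<lambda>k. (1 / fact k) *\<^sub>R mat_pow M k) sums Rep_opmat (exp (Abs_opmat M :: 'n opmat))"
    by (simp add: Rep_opmat_power Abs_opmat_inverse divide_inverse)
  then show ?thesis unfolding mat_exp_def by (rule sums_unique[symmetric])
qed

lemma Rep_opmat_prod_list:
  "Rep_opmat (prod_list (map g xs)) = foldr (\<lambda>k acc. Rep_opmat (g k) ** acc) xs (mat 1)"
  by (induction xs) simp_all

lift_definition adj :: "'n::finite opmat \<Rightarrow> 'n opmat" is mat_adj .

lemma adj_mult: "adj (x * y) = adj y * adj x"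
  by transfer (simp add: mat_adj_def vec_eq_iff matrix_matrix_mult_def mult.commute)

lemma adj_adj: "adj (adj x) = x"
  by transfer (simp add: mat_adj_def vec_eq_iff)

lemma adj_one: "adj 1 = 1"
  by transfer (simp add: mat_adj_def vec_eq_iff mat_def)

lemma linear_mat_adj: "linear mat_adj"
  by (rule linearI) (simp_all add: mat_adj_def vec_eq_iff)

lemma bounded_linear_adj: "bounded_linear (adj :: 'n::finite opmat \<Rightarrow> 'n opmat)"
proof -
  have adj_eq: "adj = (\<lambda>x. Abs_opmat (mat_adj (Rep_opmat x :: 'n cmat)))"
    by (simp add: fun_eq_iff adj_def)
  have "bounded_linear (mat_adj :: 'n cmat \<Rightarrow> 'n cmat)"
    using linear_mat_adj by (simp add: linear_conv_bounded_linear)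
  then show ?thesis
    unfolding adj_eq
    by (rule bounded_linear_compose[OF bounded_linear_Abs_opmat
          bounded_linear_compose[OF _ bounded_linear_Rep_opmat]])
qed

lemma adj_scaleR: "adj (r *\<^sub>R x) = r *\<^sub>R adj x"
  by (rule linear_scale[OF bounded_linear.linear[OF bounded_linear_adj]])

lemma adj_exp: "adj (exp x) = exp (adj x)"
proof -
  have adj_power: "adj (x ^ k) = adj x ^ k" for k
    by (induction k) (simp_all add: adj_one adj_mult power_commutes)
  have "(\<lambda>k. adj (x ^ k /\<^sub>R fact k)) sums adj (exp x)"
    by (rule bounded_linear.sums[OF bounded_linear_adj exp_converges])
  then have "(\<lambda>k. adj x ^ k /\<^sub>R fact k) sums adj (exp x)"
    by (simp add: adj_power linear_scale[OF bounded_linear.linear[OF bounded_linear_adj]])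
  then show ?thesis using exp_converges sums_unique2 by blast
qed

lemma norm_le_1_if_adj_mult_self: "adj x * x = 1 \<Longrightarrow> norm x \<le> 1"
  by transfer (rule op_norm_le_1_if_mat_adj_mult_self)

section \<open>Conjugation by exponentials\<close>

lemma bounded_linear_funpow:
  fixes f :: "'a::real_normed_vector \<Rightarrow> 'a"
  shows "bounded_linear f \<Longrightarrow> bounded_linear (f ^^ n)"
  by (induction n) (simp_all add: id_def o_def bounded_linear_ident bounded_linear_compose)

lemma norm_funpow_le:
  fixes f :: "'a::real_normed_vector \<Rightarrow> 'a"
  assumes "\<And>x. norm (f x) \<le> c * norm x" and "0 \<le> c"
  shows "norm ((f ^^ n) x) \<le> c ^ n * norm x"
proof (induction n)
  case (Suc n)
  have "norm ((f ^^ Suc n) x) \<le> c * norm ((f ^^ n) x)" using assms(1) by simp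
  also have "\<dots> \<le> c * (c ^ n * norm x)" using Suc assms(2) by (rule mult_left_mono)
  finally show ?case by (simp add: mult.assoc)
qed simp

lemma norm_commutator_le:
  fixes x b z :: "'a::real_normed_algebra"
  assumes "z * x = x * z"
  shows "norm (x * b - b * x) \<le> 2 * norm (b - z) * norm x"
proof -
  have "x * b - b * x = x * (b - z) - (b - z) * x"
    using assms by (simp add: algebra_simps)
  also have "norm \<dots> \<le> norm x * norm (b - z) + norm (b - z) * norm x"
    by (rule order_trans[OF norm_triangle_ineq4 add_mono[OF norm_mult_ineq norm_mult_ineq]])
  finally show ?thesis by (simp add: algebra_simps)
qed

lemma has_vector_derivative_exp_conjugation:
  fixes b :: "'a::{banach, real_normed_algebra_1}"
  assumes \<theta>: "(\<theta> has_vector_derivative \<theta>') (at t)" and y: "(y has_vector_derivative y') (at t)"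
  defines "c \<equiv> exp (- (\<theta> t *\<^sub>R b)) * y t * exp (\<theta> t *\<^sub>R b)"
  shows "((\<lambda>s. exp (- (\<theta> s *\<^sub>R b)) * y s * exp (\<theta> s *\<^sub>R b)) has_vector_derivative
      \<theta>' *\<^sub>R (c * b - b * c) + exp (- (\<theta> t *\<^sub>R b)) * y' * exp (\<theta> t *\<^sub>R b)) (at t)"
proof -
  have right: "((\<lambda>s. exp (\<theta> s *\<^sub>R b)) has_vector_derivative \<theta>' *\<^sub>R (exp (\<theta> t *\<^sub>R b) * b)) (at t)"
    using vector_diff_chain_at[OF \<theta> exp_scaleR_has_vector_derivative_right] by (simp add: o_def)
  have left: "((\<lambda>s. exp (- (\<theta> s *\<^sub>R b))) has_vector_derivative \<theta>' *\<^sub>R (- b * exp (- (\<theta> t *\<^sub>R b)))) (at t)"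
    using vector_diff_chain_at[OF \<theta> exp_scaleR_has_vector_derivative_left[of "- b"]] by (simp add: o_def)
  show ?thesis
    using has_vector_derivative_mult[OF has_vector_derivative_mult[OF left y] right]
    by (rule has_vector_derivative_eq_rhs)
      (simp add: c_def algebra_simps exp_times_scaleR_commute)
qed

lemma nth_deriv_Suc: "nth_deriv (Suc q) f = nth_deriv q (\<lambda>t. vector_derivative f (at t))"
  by (simp only: nth_deriv_def funpow_Suc_right o_apply)

lemma sum_filter_atLeastAtMost_Suc:
  "(\<Sum>k\<in>{k\<in>{1..Suc m}. P k}. f k)
    = (if P (Suc m) then f (Suc m) else 0) + (\<Sum>k\<in>{k\<in>{1..m}. P k}. f k)"
proof -
  have "{k\<in>{1..Suc m}. P k}
      = (if P (Suc m) then insert (Suc m) {k\<in>{1..m}. P k} else {k\<in>{1..m}. P k})"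
    by (auto simp: le_Suc_eq)
  then show ?thesis by simp
qed

section \<open>The parametrised circuit\<close>

definition angle_pair :: "real \<Rightarrow> real \<Rightarrow> nat \<Rightarrow> real" where
  "angle_pair t1 t2 i = (if i = 1 then t1 else t2)"

lemma angle_pair_upd:
  "(angle_pair t1 t2)(1 := t) = angle_pair t t2" "(angle_pair t1 t2)(2 := t2) = angle_pair t1 t2"
  by (auto simp: angle_pair_def)

locale circuit =
  fixes H V :: "nat \<Rightarrow> 'n::finite cmat" and S :: "nat \<Rightarrow> nat" and K :: nat
  assumes hermitian: "\<forall>k\<in>{1..K}. hermitian_mat (H k)"
    and unitary: "\<forall>k\<in>{1..K}. unitary_mat (V k)"
begin

definition gen :: "nat \<Rightarrow> 'n opmat" where
  "gen k = Abs_opmat (cscale (- \<i>) (H k))"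

definition gate :: "nat \<Rightarrow> real \<Rightarrow> 'n opmat" where
  "gate k t = Abs_opmat (V k) * exp (t *\<^sub>R gen k)"

definition layer :: "nat \<Rightarrow> real \<Rightarrow> 'n opmat \<Rightarrow> 'n opmat" where
  "layer k t x = adj (gate k t) * x * gate k t"

definition bracket :: "nat \<Rightarrow> 'n opmat \<Rightarrow> 'n opmat" where
  "bracket k x = x * gen k - gen k * x"

lemma Rep_opmat_gate:
  "Rep_opmat (gate k t) = V k ** mat_exp (cscale (- \<i> * complex_of_real t) (H k))"
  by (simp only: gate_def gen_def times_opmat.rep_eq Abs_opmat_inverse[OF UNIV_I]
      cscale_mult_of_real mat_exp_eq_Rep_opmat_exp scaleR_opmat.abs_eq)

lemma adj_gen: "k \<in> {1..K} \<Longrightarrow> adj (gen k) = - gen k"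
proof -
  assume "k \<in> {1..K}"
  then have "mat_adj (cscale (- \<i>) (H k)) = - cscale (- \<i>) (H k)"
    using hermitian by (simp add: mat_adj_cscale hermitian_mat_def) (simp add: cscale_def vec_eq_iff)
  then show ?thesis by (simp add: gen_def adj.abs_eq uminus_opmat.abs_eq)
qed

lemma adj_gate: "k \<in> {1..K} \<Longrightarrow> adj (gate k t) = exp (- (t *\<^sub>R gen k)) * adj (Abs_opmat (V k))"
  by (simp add: gate_def adj_mult adj_exp adj_scaleR adj_gen)

lemma gate_unitary:
  assumes k: "k \<in> {1..K}"
  shows "adj (gate k t) * gate k t = 1" and "gate k t * adj (gate k t) = 1"
proof -
  define v where "v = Abs_opmat (V k)"
  define x where "x = t *\<^sub>R gen k"
  have v: "adj v * v = 1" "v * adj v = 1"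
    using unitary k by (simp_all add: v_def unitary_mat_def adj.abs_eq times_opmat.abs_eq one_opmat.abs_eq)
  have "adj (gate k t) * gate k t = exp (- x) * (adj v * v) * exp x"
    unfolding adj_gate[OF k] by (simp add: gate_def v_def x_def mult.assoc)
  also have "\<dots> = 1" using v exp_minus_inverse[of "- x"] by simp
  finally show "adj (gate k t) * gate k t = 1" .
  have "gate k t * adj (gate k t) = v * (exp x * exp (- x)) * adj v"
    unfolding adj_gate[OF k] by (simp add: gate_def v_def x_def mult.assoc)
  also have "\<dots> = 1" using v exp_minus_inverse[of x] by simp
  finally show "gate k t * adj (gate k t) = 1" .
qed

lemma layer_eq:
  assumes k: "k \<in> {1..K}"
  shows "layer k t x
    = exp (- (t *\<^sub>R gen k)) * (adj (Abs_opmat (V k)) * x * Abs_opmat (V k)) * exp (t *\<^sub>R gen k)"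
  unfolding layer_def adj_gate[OF k] unfolding gate_def by (simp add: mult.assoc)

lemma norm_layer_le:
  assumes k: "k \<in> {1..K}"
  shows "norm (layer k t x) \<le> norm x"
proof -
  have "norm (gate k t) \<le> 1"
    using gate_unitary(1)[OF k] by (rule norm_le_1_if_adj_mult_self)
  moreover have "norm (adj (gate k t)) \<le> 1"
    using gate_unitary(2)[OF k] by (intro norm_le_1_if_adj_mult_self) (simp add: adj_adj)
  ultimately have "norm (adj (gate k t)) * norm x * norm (gate k t) \<le> 1 * norm x * 1"
    by (intro mult_mono) simp_all
  then show ?thesis
    unfolding layer_def by (smt (verit) norm_mult_ineq mult_right_mono norm_ge_zero)
qed

lemma norm_bracket_le:
  assumes k: "k \<in> {1..K}"
  shows "norm (bracket k x) \<le> 2 * omega_max (H k) * norm x"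
proof -
  obtain c where c: "op_norm (H k - c *\<^sub>R mat 1) \<le> omega_max (H k)"
    using hermitian k hermitian_op_norm_shift_le by blast
  \<comment> \<open>shifting the generator by the central element z does not change the bracket\<close>
  define z :: "'n opmat" where "z = Abs_opmat (cscale (- \<i>) (c *\<^sub>R mat 1))"
  have "z * x = x * z"
    by (simp add: z_def Rep_opmat_inject[symmetric] Abs_opmat_inverse cscale_scalar_commute)
  moreover have "norm (gen k - z) \<le> omega_max (H k)"
  proof -
    have "gen k - z = Abs_opmat (cscale (- \<i>) (H k - c *\<^sub>R mat 1))"
      by (simp add: gen_def z_def minus_opmat.abs_eq cscale_diff)
    then have "norm (gen k - z) \<le> op_norm (H k - c *\<^sub>R mat 1)"
      using op_norm_cscale_le[of "- \<i>" "H k - c *\<^sub>R mat 1"] by (simp add: norm_opmat.abs_eq)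
    with c show ?thesis by simp
  qed
  ultimately show ?thesis
    using norm_commutator_le[of z x "gen k"] unfolding bracket_def
    by (smt (verit) mult_right_mono norm_ge_zero)
qed

lemma has_vector_derivative_layer:
  assumes k: "k \<in> {1..K}"
    and \<theta>: "(\<theta> has_vector_derivative \<theta>') (at t)" and x: "(x has_vector_derivative x') (at t)"
  shows "((\<lambda>s. layer k (\<theta> s) (x s)) has_vector_derivative
      \<theta>' *\<^sub>R bracket k (layer k (\<theta> t) (x t)) + layer k (\<theta> t) x') (at t)"
proof -
  define v where "v = Abs_opmat (V k)"
  have "((\<lambda>s. adj v * x s * v) has_vector_derivative adj v * x' * v) (at t)"
    using x by (intro has_vector_derivative_mult_left has_vector_derivative_mult_right)
  from has_vector_derivative_exp_conjugation[OF \<theta> this, of "gen k"] show ?thesis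
    by (simp add: layer_eq[OF k] v_def bracket_def)
qed

lemma bounded_linear_layer: "bounded_linear (layer k t)"
  unfolding layer_def by (intro bounded_linear_intros)

lemma bounded_linear_bracket: "bounded_linear (bracket k)"
  unfolding bracket_def by (intro bounded_linear_intros)

(* evolved a e \<theta> m is the image of a under layers 1, ..., m, where layer k uses the angle
   \<theta> (S k) and is followed by e k applications of its derivative bracket k. *)
fun evolved :: "'n opmat \<Rightarrow> (nat \<Rightarrow> nat) \<Rightarrow> (nat \<Rightarrow> real) \<Rightarrow> nat \<Rightarrow> 'n opmat" where
  "evolved a e \<theta> 0 = a"
| "evolved a e \<theta> (Suc m) = (bracket (Suc m) ^^ e (Suc m)) (layer (Suc m) (\<theta> (S (Suc m))) (evolved a e \<theta> m))"

lemma evolved_cong: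
  "(\<And>k. k \<in> {1..m} \<Longrightarrow> e k = e' k \<and> \<theta> (S k) = \<theta>' (S k)) \<Longrightarrow> evolved a e \<theta> m = evolved a e' \<theta>' m"
  by (induction m) auto

lemma evolved_raise_last:
  "evolved a (e(Suc m := Suc (e (Suc m)))) \<theta> (Suc m)
    = (bracket (Suc m) ^^ e (Suc m)) (bracket (Suc m) (layer (Suc m) (\<theta> (S (Suc m))) (evolved a e \<theta> m)))"
proof -
  have "evolved a (e(Suc m := Suc (e (Suc m)))) \<theta> m = evolved a e \<theta> m"
    by (rule evolved_cong) simp
  then show ?thesis by (simp add: funpow_swap1)
qed

lemma has_vector_derivative_evolved:
  assumes "m \<le> K"
  shows "((\<lambda>s. evolved a e (\<theta>(j := s)) m) has_vector_derivative
      (\<Sum>k\<in>{k\<in>{1..m}. S k = j}. evolved a (e(k := Suc (e k))) (\<theta>(j := t)) m)) (at t)"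
  using assms
proof (induction m)
  case (Suc m)
  define l where "l = Suc m"
  have l: "l \<in> {1..K}" using Suc.prems by (simp add: l_def)
  define T where "T = bracket l ^^ e l"
  define \<phi> where "\<phi> = (\<theta>(j := t)) (S l)"
  define x where "x s = evolved a e (\<theta>(j := s)) m" for s
  define x' where "x' = (\<Sum>k\<in>{k\<in>{1..m}. S k = j}. evolved a (e(k := Suc (e k))) (\<theta>(j := t)) m)"
  have lin: "bounded_linear T"
    unfolding T_def by (rule bounded_linear_funpow[OF bounded_linear_bracket])
  have angle: "((\<lambda>s. (\<theta>(j := s)) (S l)) has_vector_derivative (if S l = j then 1 else 0)) (at t)"
    by (cases "S l = j") simp_all
  have "(x has_vector_derivative x') (at t)"
    unfolding x_def x'_def by (rule Suc.IH) (use Suc.prems in simp)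
  then have deriv: "((\<lambda>s. T (layer l ((\<theta>(j := s)) (S l)) (x s))) has_vector_derivative
      T ((if S l = j then 1 else 0) *\<^sub>R bracket l (layer l \<phi> (x t)) + layer l \<phi> x')) (at t)"
    unfolding \<phi>_def
    by (intro bounded_linear.has_vector_derivative[OF lin] has_vector_derivative_layer[OF l angle])
  have fun_eq: "(\<lambda>s. T (layer l ((\<theta>(j := s)) (S l)) (x s))) = (\<lambda>s. evolved a e (\<theta>(j := s)) (Suc m))"
    by (simp add: T_def x_def l_def)
  have value_eq: "T ((if S l = j then 1 else 0) *\<^sub>R bracket l (layer l \<phi> (x t)) + layer l \<phi> x')
      = (\<Sum>k\<in>{k\<in>{1..Suc m}. S k = j}. evolved a (e(k := Suc (e k))) (\<theta>(j := t)) (Suc m))"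
  proof -
    have "T (bracket l (layer l \<phi> (x t))) = evolved a (e(l := Suc (e l))) (\<theta>(j := t)) (Suc m)"
      by (simp only: T_def l_def \<phi>_def x_def evolved_raise_last)
    moreover have "T (layer l \<phi> (evolved a (e(k := Suc (e k))) (\<theta>(j := t)) m))
        = evolved a (e(k := Suc (e k))) (\<theta>(j := t)) (Suc m)" if "k \<in> {1..m}" for k
      using that by (simp add: T_def l_def \<phi>_def)
    ultimately show ?thesis
      unfolding sum_filter_atLeastAtMost_Suc x'_def unfolding l_def[symmetric]
      by (simp add: linear_add linear_scale linear_sum bounded_linear.linear[OF lin]
          bounded_linear.linear[OF bounded_linear_layer])
  qed
  show ?case using deriv unfolding fun_eq value_eq .
qed simp

lemma norm_evolved_le:
  "m \<le> K \<Longrightarrow> norm (evolved a e \<theta> m) \<le> (\<Prod>k\<in>{1..m}. (2 * omega_max (H k)) ^ e k) * norm a"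
proof (induction m)
  case (Suc m)
  have l: "Suc m \<in> {1..K}" using Suc.prems by simp
  have nonneg: "0 \<le> 2 * omega_max (H (Suc m))"
    using hermitian l omega_max_nonneg by fastforce
  have "norm (evolved a e \<theta> (Suc m))
      \<le> (2 * omega_max (H (Suc m))) ^ e (Suc m) * norm (layer (Suc m) (\<theta> (S (Suc m))) (evolved a e \<theta> m))"
    using norm_funpow_le[OF norm_bracket_le[OF l] nonneg] by simp
  also have "\<dots> \<le> (2 * omega_max (H (Suc m))) ^ e (Suc m) * ((\<Prod>k\<in>{1..m}. (2 * omega_max (H k)) ^ e k) * norm a)"
    using Suc nonneg by (intro mult_left_mono order.trans[OF norm_layer_le[OF l]]) simp_all
  finally show ?case by (simp add: prod.nat_ivl_Suc' mult_ac)
qed simp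

definition weight :: "(nat \<Rightarrow> nat) \<Rightarrow> real" where
  "weight e = (\<Prod>k\<in>{1..K}. (2 * omega_max (H k)) ^ e k)"

definition rate :: "nat \<Rightarrow> real" where
  "rate j = (\<Sum>k\<in>{k\<in>{1..K}. S k = j}. 2 * omega_max (H k))"

(* Lists rather than sets of exponent vectors: the same vector arises from different orders
   of differentiation and has to be counted with multiplicity. *)
definition deriv_exps :: "nat \<Rightarrow> (nat \<Rightarrow> nat) list \<Rightarrow> (nat \<Rightarrow> nat) list" where
  "deriv_exps j es = [e(k := Suc (e k)). e \<leftarrow> es, k \<leftarrow> sorted_list_of_set {k\<in>{1..K}. S k = j}]"

definition total :: "'n opmat \<Rightarrow> (nat \<Rightarrow> nat) list \<Rightarrow> (nat \<Rightarrow> real) \<Rightarrow> 'n opmat" where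
  "total a es \<theta> = (\<Sum>e\<leftarrow>es. evolved a e \<theta> K)"

lemma sum_list_deriv_exps:
  "(\<Sum>e'\<leftarrow>deriv_exps j es. f e') = (\<Sum>e\<leftarrow>es. \<Sum>k\<in>{k\<in>{1..K}. S k = j}. f (e(k := Suc (e k))))"
  by (induction es) (simp_all add: deriv_exps_def sum_list_distinct_conv_sum_set fun_upd_def)

lemma has_vector_derivative_total:
  "((\<lambda>s. total a es (\<theta>(j := s))) has_vector_derivative total a (deriv_exps j es) (\<theta>(j := t))) (at t)"
proof (induction es)
  case (Cons e es)
  have "total a (e # es) \<theta>' = evolved a e \<theta>' K + total a es \<theta>'"
    and "total a (deriv_exps j (e # es)) \<theta>'
      = (\<Sum>k\<in>{k\<in>{1..K}. S k = j}. evolved a (e(k := Suc (e k))) \<theta>' K) + total a (deriv_exps j es) \<theta>'"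
    for \<theta>'
    by (simp_all add: total_def deriv_exps_def sum_list_distinct_conv_sum_set)
  then show ?case
    by (simp only:) (intro has_vector_derivative_add has_vector_derivative_evolved Cons.IH order_refl)
qed (simp add: total_def deriv_exps_def)

lemma nth_deriv_total:
  "nth_deriv q (\<lambda>s. Rep_opmat (total a es (\<theta>(j := s))))
    = (\<lambda>s. Rep_opmat (total a ((deriv_exps j ^^ q) es) (\<theta>(j := s))))"
proof (induction q arbitrary: es)
  case (Suc q)
  have "(\<lambda>t. vector_derivative (\<lambda>s. Rep_opmat (total a es (\<theta>(j := s)))) (at t))
      = (\<lambda>t. Rep_opmat (total a (deriv_exps j es) (\<theta>(j := t))))"
    by (intro ext vector_derivative_at bounded_linear.has_vector_derivative[OF bounded_linear_Rep_opmat]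
        has_vector_derivative_total)
  then show ?case
    unfolding nth_deriv_Suc Suc.IH funpow_Suc_right o_apply by (simp only: Suc.IH)
qed (simp add: nth_deriv_def)

lemma norm_total_le: "norm (total a es \<theta>) \<le> (\<Sum>e\<leftarrow>es. weight e) * norm a"
proof (induction es)
  case (Cons e es)
  have "norm (total a (e # es) \<theta>) \<le> norm (evolved a e \<theta> K) + norm (total a es \<theta>)"
    by (simp add: total_def norm_triangle_ineq)
  also have "\<dots> \<le> weight e * norm a + (\<Sum>e\<leftarrow>es. weight e) * norm a"
    unfolding weight_def using Cons.IH by (intro add_mono norm_evolved_le) (simp_all add: weight_def)
  finally show ?case by (simp add: algebra_simps)
qed (simp add: total_def)

lemma weight_raise:
  assumes k: "k \<in> {1..K}"
  shows "weight (e(k := Suc (e k))) = 2 * omega_max (H k) * weight e"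
proof -
  have "weight e' = (2 * omega_max (H k)) ^ e' k * (\<Prod>l\<in>{1..K} - {k}. (2 * omega_max (H l)) ^ e' l)" for e'
    unfolding weight_def using k by (simp add: prod.remove)
  moreover have "(\<Prod>l\<in>{1..K} - {k}. (2 * omega_max (H l)) ^ (e(k := Suc (e k))) l)
      = (\<Prod>l\<in>{1..K} - {k}. (2 * omega_max (H l)) ^ e l)"
    by (rule prod.cong) simp_all
  ultimately show ?thesis by simp
qed

lemma sum_list_weight_deriv_exps_funpow:
  "(\<Sum>e\<leftarrow>(deriv_exps j ^^ q) es. weight e) = rate j ^ q * (\<Sum>e\<leftarrow>es. weight e)"
proof (induction q)
  case (Suc q)
  have "(\<Sum>e\<leftarrow>deriv_exps j es'. weight e) = rate j * (\<Sum>e\<leftarrow>es'. weight e)" for es'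
  proof -
    have "(\<Sum>k\<in>{k\<in>{1..K}. S k = j}. weight (e(k := Suc (e k)))) = rate j * weight e" for e
      by (simp add: weight_raise rate_def sum_distrib_right)
    then show ?thesis by (simp add: sum_list_deriv_exps sum_list_const_mult)
  qed
  with Suc show ?case by simp
qed simp

lemma adj_gates_conj_eq_evolved:
  "m \<le> K \<Longrightarrow> adj (\<Prod>k\<leftarrow>[1..<m+1]. gate k (\<theta> (S k))) * a * (\<Prod>k\<leftarrow>[1..<m+1]. gate k (\<theta> (S k)))
    = evolved a (\<lambda>_. 0) \<theta> m"
proof (induction m)
  case (Suc m)
  then show ?case
    by (simp add: adj_mult adj_one layer_def mult.assoc flip: Suc.IH)
qed (simp add: adj_one)

lemma channel_eq_total:
  "channel H V S K t1 t2 A = Rep_opmat (total (Abs_opmat A) [\<lambda>_. 0] (angle_pair t1 t2))"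
proof -
  define P where "P = (\<Prod>k\<leftarrow>[1..<K+1]. gate k (angle_pair t1 t2 (S k)))"
  have "circuit_U H V S K t1 t2 = Rep_opmat P"
    by (simp add: circuit_U_def P_def Rep_opmat_prod_list Rep_opmat_gate angle_pair_def)
  then have "channel H V S K t1 t2 A = Rep_opmat (adj P * Abs_opmat A * P)"
    by (simp add: channel_def adj.rep_eq Abs_opmat_inverse)
  also have "adj P * Abs_opmat A * P = total (Abs_opmat A) [\<lambda>_. 0] (angle_pair t1 t2)"
    using adj_gates_conj_eq_evolved[of K "angle_pair t1 t2" "Abs_opmat A"]
    by (simp add: P_def total_def)
  finally show ?thesis .
qed

lemma mixed_partial_channel:
  assumes S12: "\<forall>k\<in>{1..K}. S k \<in> {1, 2}"
  shows "mixed_partial p1 p2 (\<lambda>t1 t2. channel H V S K t1 t2 A) \<phi>1 \<phi>2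
    = Rep_opmat (total (Abs_opmat A) ((deriv_exps 1 ^^ p1) ((deriv_exps 2 ^^ p2) [\<lambda>_. 0])) (angle_pair \<phi>1 \<phi>2))"
proof -
  define a where "a = Abs_opmat A"
  define es where "es = (deriv_exps 2 ^^ p2) [\<lambda>_. 0]"
  \<comment> \<open>S takes values in {1, 2}, so varying t2 is the point update of parameter 2\<close>
  have "total a es' (angle_pair t1 t) = total a es' ((angle_pair t1 t2)(2 := t))" for es' t1 t2 t
    unfolding total_def using S12
    by (intro arg_cong[where f = sum_list] map_cong refl evolved_cong) (auto simp: angle_pair_def)
  then have channel: "(\<lambda>t. channel H V S K t1 t A)
      = (\<lambda>t. Rep_opmat (total a [\<lambda>_. 0] ((angle_pair t1 t2)(2 := t))))" for t1 t2
    by (simp add: channel_eq_total a_def)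
  have inner: "nth_deriv p2 (\<lambda>t. channel H V S K t1 t A) t2 = Rep_opmat (total a es (angle_pair t1 t2))"
    for t1 t2
    unfolding channel[of t1 t2] nth_deriv_total es_def by (simp only: angle_pair_upd)
  have outer: "(\<lambda>t. Rep_opmat (total a es (angle_pair t \<phi>2)))
      = (\<lambda>t. Rep_opmat (total a es ((angle_pair \<phi>1 \<phi>2)(1 := t))))"
    by (simp only: angle_pair_upd)
  show ?thesis
    unfolding mixed_partial_def inner outer nth_deriv_total
    unfolding angle_pair_upd a_def es_def ..
qed

end

theorem lemma7:
  fixes H V :: "nat \<Rightarrow> complex^'n^'n" and S :: "nat \<Rightarrow> nat" and K :: nat
    and A :: "complex^'n^'n" and p1 p2 :: nat and \<phi>1 \<phi>2 :: real
  assumes herm: "\<forall>k\<in>{1..K}. hermitian_mat (H k)"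
    and unit: "\<forall>k\<in>{1..K}. unitary_mat (V k)"
    and S12: "\<forall>k\<in>{1..K}. S k \<in> {1, 2}"
  shows "op_norm (mixed_partial p1 p2 (\<lambda>t1 t2. channel H V S K t1 t2 A) \<phi>1 \<phi>2)
    \<le> (\<Sum>l\<in>{l\<in>{1..K}. S l = 1}. 2 * omega_max (H l)) ^ p1
      * (\<Sum>l\<in>{l\<in>{1..K}. S l = 2}. 2 * omega_max (H l)) ^ p2 * op_norm A"
proof -
  interpret circuit H V S K
    using herm unit by unfold_locales
  define es where "es = (deriv_exps 1 ^^ p1) ((deriv_exps 2 ^^ p2) [\<lambda>_. 0])"
  have "op_norm (mixed_partial p1 p2 (\<lambda>t1 t2. channel H V S K t1 t2 A) \<phi>1 \<phi>2)
      = norm (total (Abs_opmat A) es (angle_pair \<phi>1 \<phi>2))"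
    by (simp add: mixed_partial_channel[OF S12] es_def norm_opmat.rep_eq)
  also have "\<dots> \<le> (\<Sum>e\<leftarrow>es. weight e) * norm (Abs_opmat A :: 'n opmat)"
    by (rule norm_total_le)
  also have "(\<Sum>e\<leftarrow>es. weight e) = rate 1 ^ p1 * rate 2 ^ p2"
    unfolding es_def sum_list_weight_deriv_exps_funpow by (simp add: weight_def)
  also have "norm (Abs_opmat A :: 'n opmat) = op_norm A"
    by (simp add: norm_opmat.abs_eq)
  finally show ?thesis by (simp add: rate_def)
qed

end
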